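(* If the designer's preferences $(A_1,A_0,B_1,B_0)$ have at most one nonzero entry, i.e. are of one of the forms $(A_1,0,0,0)$, $(0,A_0,0,0)$, $(0,0,B_1,0)$, $(0,0,0,B_0)$, then a null equilibrium exists.
   Context: A unit mass of individuals has costs $\gamma_i\in\mathbb{R}$ of compliance ($\beta_i=1$) distributed according to a continuously differentiable CDF $F$ with log-concave density $f$ of full support on $\mathbb{R}$. A classifier $\delta=(\delta_1,\delta_0)\in[0,1]^2$ assigns $d_i$ with $\Pr[d_i=s_i\mid s_i]=\delta_{s_i}$ where $\Pr[s_i=\beta_i]=\phi\in(\tfrac12,1]$; individuals with $d_i=1$ receive reward $r\in\mathbb{R}$. Let $\rho(\delta)=(\delta_1+\delta_0-1)(2\phi-1)$; $\delta$ is null iff $\rho=0$. Individuals comply iff $\gamma_i\le r\rho$; compliance rate $\pi=F(r\rho)$. Designer payoffs $(A_1,A_0,B_1,B_0)\in\mathbb{R}_+^4$ ($A_1$: complier with $d_i=1$; $A_0$: complier with $d_i=0$; $B_1$: non-complier with $d_i=0$; $B_0$: non-complier with $d_i=1$), expected payoff $EU_D(\delta\mid r)=\pi[\phi(A_1\delta_1+A_0(1-\delta_1))+(1-\phi)(A_0\delta_0+A_1(1-\delta_0))]+(1-\pi)[\phi(B_1\delta_0+B_0(1-\delta_0))+(1-\phi)(B_0\delta_1+B_1(1-\delta_1))]$. Rewards are budget balanced and each individual also gets $t\pi$, $t\ge0$; individual $i$'s payoff from $r$ given $\delta$ is $U_i(r)=-\gamma_i+r\rho(1-F(r\rho))+tF(r\rho)$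 if $\gamma_i\le r\rho$, else $-r\rho F(r\rho)+tF(r\rho)$. The median individual has cost $\gamma_\mu$ with $F(\gamma_\mu)=\tfrac12$. An equilibrium is a pair $(r^*,\delta^* )$ such that $r^*$ maximizes $U_\mu(r)$ given $\delta^*$ and $\delta^*$ maximizes $EU_D(\delta\mid r^* )$ over $[0,1]^2$; a null equilibrium is one with $r^*=0$ and/or $\delta^*$ null. *)

theory Defs
  imports "HOL-Analysis.Analysis"
begin

definition classifiers :: "(real \<times> real) set" where
  "classifiers = {0..1} \<times> {0..1}"

definition rho :: "real \<Rightarrow> real \<times> real \<Rightarrow> real" where
  "rho phi d = (fst d + snd d - 1) * (2 * phi - 1)"

definition null_classifier :: "real \<Rightarrow> real \<times> real \<Rightarrow> bool" where
  "null_classifier phi d \<longleftrightarrow> rho phi d = 0"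

definition EU_D :: "(real \<Rightarrow> real) \<Rightarrow> real \<Rightarrow> real \<Rightarrow> real \<Rightarrow> real \<Rightarrow> real
                   \<Rightarrow> real \<times> real \<Rightarrow> real \<Rightarrow> real" where
  "EU_D F phi A1 A0 B1 B0 d r =
     (let d1 = fst d; d0 = snd d; pi = F (r * rho phi d) in
      pi * (phi * (A1 * d1 + A0 * (1 - d1)) + (1 - phi) * (A0 * d0 + A1 * (1 - d0)))
      + (1 - pi) * (phi * (B1 * d0 + B0 * (1 - d0)) + (1 - phi) * (B0 * d1 + B1 * (1 - d1))))"

definition U_ind :: "(real \<Rightarrow> real) \<Rightarrow> real \<Rightarrow> real \<Rightarrow> real \<Rightarrow> real \<times> real \<Rightarrow> real \<Rightarrow> real" where
  "U_ind F phi t gamma d r =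
     (let p = r * rho phi d in
      if gamma \<le> p then - gamma + p * (1 - F p) + t * F p
      else - p * F p + t * F p)"

definition equilibrium ::
  "(real \<Rightarrow> real) \<Rightarrow> real \<Rightarrow> real \<Rightarrow> real \<Rightarrow> real \<Rightarrow> real \<Rightarrow> real \<Rightarrow> real
   \<Rightarrow> real \<Rightarrow> real \<times> real \<Rightarrow> bool" where
  "equilibrium F phi t gmu A1 A0 B1 B0 r d \<longleftrightarrow>
     d \<in> classifiers \<and>
     (\<forall>r'. U_ind F phi t gmu d r' \<le> U_ind F phi t gmu d r) \<and>
     (\<forall>d'\<in>classifiers. EU_D F phi A1 A0 B1 B0 d' r \<le> EU_D F phi A1 A0 B1 B0 d r)"

definition null_equilibrium ::
  "(real \<Rightarrow> real) \<Rightarrow> real \<Rightarrow> real \<Rightarrow> real \<Rightarrow> real \<Rightarrow> real \<Rightarrow> real \<Rightarrow> real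
   \<Rightarrow> real \<Rightarrow> real \<times> real \<Rightarrow> bool" where
  "null_equilibrium F phi t gmu A1 A0 B1 B0 r d \<longleftrightarrow>
     equilibrium F phi t gmu A1 A0 B1 B0 r d \<and> (r = 0 \<or> null_classifier phi d)"

end

theory Submission
  imports Defs
begin

text \<open>At reward \<open>r = 0\<close> the compliance rate is the constant \<open>F 0 \<in> [0, 1]\<close>, so the
designer's payoff is affine in the classifier. If only \<open>A1\<close> and \<open>B0\<close> can be nonzero it is
maximised by rewarding everyone, \<open>(1, 0)\<close>; if only \<open>A0\<close> and \<open>B1\<close>, by rewarding no one,
\<open>(0, 1)\<close>. Both classifiers are null, and against a null classifier the median individual's
payoff does not depend on the reward, so \<open>r = 0\<close> is a best response.\<close>

lemma cdf_bounds:
  fixes F :: "real \<Rightarrow> real"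
  assumes "mono F" and "(F \<longlongrightarrow> 0) at_bot" and "(F \<longlongrightarrow> 1) at_top"
  shows "0 \<le> F x" and "F x \<le> 1"
proof -
  have "\<forall>\<^sub>F y in at_bot. F y \<le> F x"
    using eventually_le_at_bot[of x] by eventually_elim (rule monoD[OF assms(1)])
  with assms(2) show "0 \<le> F x" by (rule tendsto_upperbound) simp
  have "\<forall>\<^sub>F y in at_top. F x \<le> F y"
    using eventually_ge_at_top[of x] by eventually_elim (rule monoD[OF assms(1)])
  with assms(3) show "F x \<le> 1" by (rule tendsto_lowerbound) simp
qed

lemma U_ind_null_classifier_const:
  assumes "null_classifier phi d"
  shows "U_ind F phi t gamma d r' = U_ind F phi t gamma d r"
  using assms by (simp add: null_classifier_def U_ind_def)

lemma null_equilibrium_at_zero_reward: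
  assumes "d \<in> classifiers" and "null_classifier phi d"
    and "\<And>d'. d' \<in> classifiers \<Longrightarrow> EU_D F phi A1 A0 B1 B0 d' 0 \<le> EU_D F phi A1 A0 B1 B0 d 0"
  shows "null_equilibrium F phi t gmu A1 A0 B1 B0 0 d"
  using assms U_ind_null_classifier_const[OF assms(2), of F t gmu _ 0]
  unfolding null_equilibrium_def equilibrium_def by (metis order_refl)

lemma EU_D_zero_reward:
  "EU_D F phi A1 A0 B1 B0 d 0 =
     F 0 * (phi * (A1 * fst d + A0 * (1 - fst d)) + (1 - phi) * (A0 * snd d + A1 * (1 - snd d)))
     + (1 - F 0) * (phi * (B1 * snd d + B0 * (1 - snd d)) + (1 - phi) * (B0 * fst d + B1 * (1 - fst d)))"
  by (simp add: EU_D_def Let_def)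

lemma convex_combination_le:
  fixes p a x y :: real
  assumes "0 \<le> p" "p \<le> 1" "0 \<le> a" "x \<le> 1" "y \<le> 1"
  shows "p * (a * x) + (1 - p) * (a * y) \<le> a"
proof -
  have "p * (a * x) + (1 - p) * (a * y) \<le> p * a + (1 - p) * a"
    using assms by (intro add_mono mult_left_mono) (auto simp: mult_left_le)
  then show ?thesis by (simp add: algebra_simps)
qed

lemma reward_all_best_response_at_zero_reward:
  assumes "0 \<le> F 0" "F 0 \<le> 1" "0 \<le> phi" "phi \<le> 1" "0 \<le> A1" "0 \<le> B0"
    and "d \<in> classifiers"
  shows "EU_D F phi A1 0 0 B0 d 0 \<le> EU_D F phi A1 0 0 B0 (1, 0) 0"
proof -
  have "d \<in> {0..1} \<times> {0..1}" using \<open>d \<in> classifiers\<close> by (simp add: classifiers_def)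
  then have "phi * (A1 * fst d) + (1 - phi) * (A1 * (1 - snd d)) \<le> A1"
    and "phi * (B0 * (1 - snd d)) + (1 - phi) * (B0 * fst d) \<le> B0"
    using assms by (auto intro: convex_combination_le)
  then have "EU_D F phi A1 0 0 B0 d 0 \<le> F 0 * A1 + (1 - F 0) * B0"
    unfolding EU_D_zero_reward using assms by (simp add: add_mono mult_left_mono)
  also have "\<dots> = EU_D F phi A1 0 0 B0 (1, 0) 0"
    by (simp add: EU_D_zero_reward algebra_simps)
  finally show ?thesis .
qed

lemma reward_none_best_response_at_zero_reward:
  assumes "0 \<le> F 0" "F 0 \<le> 1" "0 \<le> phi" "phi \<le> 1" "0 \<le> A0" "0 \<le> B1"
    and "d \<in> classifiers"
  shows "EU_D F phi 0 A0 B1 0 d 0 \<le> EU_D F phi 0 A0 B1 0 (0, 1) 0"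
proof -
  have "d \<in> {0..1} \<times> {0..1}" using \<open>d \<in> classifiers\<close> by (simp add: classifiers_def)
  then have "phi * (A0 * (1 - fst d)) + (1 - phi) * (A0 * snd d) \<le> A0"
    and "phi * (B1 * snd d) + (1 - phi) * (B1 * (1 - fst d)) \<le> B1"
    using assms by (auto intro: convex_combination_le)
  then have "EU_D F phi 0 A0 B1 0 d 0 \<le> F 0 * A0 + (1 - F 0) * B1"
    unfolding EU_D_zero_reward using assms by (simp add: add_mono mult_left_mono)
  also have "\<dots> = EU_D F phi 0 A0 B1 0 (0, 1) 0"
    by (simp add: EU_D_zero_reward algebra_simps)
  finally show ?thesis .
qed

theorem corollary3:
  fixes F f :: "real \<Rightarrow> real" and phi t gmu A1 A0 B1 B0 :: real
  assumes F_deriv: "\<And>x. (F has_real_derivative f x) (at x)"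
      and f_cont: "continuous_on UNIV f"
      and f_pos: "\<And>x. f x > 0"
      and f_logconcave: "concave_on UNIV (\<lambda>x. ln (f x))"
      and F_bot: "(F \<longlongrightarrow> 0) at_bot"
      and F_top: "(F \<longlongrightarrow> 1) at_top"
      and phi: "1/2 < phi" "phi \<le> 1"
      and t: "t \<ge> 0"
      and median: "F gmu = 1/2"
      and nonneg: "A1 \<ge> 0" "A0 \<ge> 0" "B1 \<ge> 0" "B0 \<ge> 0"
      and prefs: "(A0 = 0 \<and> B1 = 0 \<and> B0 = 0) \<or> (A1 = 0 \<and> B1 = 0 \<and> B0 = 0)
                  \<or> (A1 = 0 \<and> A0 = 0 \<and> B0 = 0) \<or> (A1 = 0 \<and> A0 = 0 \<and> B1 = 0)"
  shows "\<exists>r d. null_equilibrium F phi t gmu A1 A0 B1 B0 r d"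
proof -
  have "mono F"
    using DERIV_nonneg_imp_nondecreasing F_deriv f_pos by (metis less_imp_le monoI)
  then have F0: "0 \<le> F 0" "F 0 \<le> 1"
    using F_bot F_top by (rule cdf_bounds)+
  have phi0: "0 \<le> phi" using phi(1) by simp
  from prefs consider "A0 = 0" "B1 = 0" | "A1 = 0" "B0 = 0" by blast
  then show ?thesis
  proof cases
    case 1
    have "null_equilibrium F phi t gmu A1 A0 B1 B0 0 (1, 0)"
      using 1 by (auto simp: classifiers_def null_classifier_def rho_def
          intro!: null_equilibrium_at_zero_reward
            reward_all_best_response_at_zero_reward[where F = F, OF F0 phi0 phi(2) nonneg(1,4)])
    then show ?thesis by blast
  next
    case 2
    have "null_equilibrium F phi t gmu A1 A0 B1 B0 0 (0, 1)"
      using 2 by (auto simp: classifiers_def null_classifier_def rho_def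
          intro!: null_equilibrium_at_zero_reward
            reward_none_best_response_at_zero_reward[where F = F, OF F0 phi0 phi(2) nonneg(2,3)])
    then show ?thesis by blast
  qed
qed

end
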